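(* Let $n\ge 1$, let $B=(b_{ij})\in\mathbb{Z}^{n\times n}$ be nonsingular, $M=\max_{i,j}|b_{ij}|$, and let $B_\epsilon$, $\epsilon_1,\dots,\epsilon_{n+1}$, $p$ be as constructed in the context. Then $S_{B_\epsilon}\subseteq S_B$. Moreover, for every $x\in S_{B_\epsilon}$, writing $c(x)=\sum_{i=1}^n b_{1i}x_i$, $$\lambda_1(L(B_\epsilon))^2=\|Bx\|^2\epsilon_{n+1}^2+\sum_{i=1}^n x_i^2\epsilon_i^2+\sum_{i=1}^n 2c(x)x_i\,\epsilon_{n+1}\epsilon_i+\sum_{1\le i<j\le n}2x_ix_j\,\epsilon_i\epsilon_j,$$ where each of the integers $\|Bx\|^2$, $x_i^2$, $2c(x)x_i$, $2x_ix_j$ lies in $[-\lfloor p/2\rfloor,\lfloor p/2\rfloor]$ and the products $\epsilon_i\epsilon_j$ ($1\le i\le j\le n+1$) are pairwise distinct powers of $p$.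
   Context: For a nonsingular $B\in\mathbb{R}^{n\times n}$, $L(B)$ is the lattice spanned by its columns, $\lambda_1(L(B))$ is the Euclidean length of a shortest nonzero lattice vector, and $S_B=\{x\in\mathbb{Z}^n : \|Bx\|=\lambda_1(L(B))\}$. Construction: Put $M_1=2(M+1)^n n^n$, $M_2=(M+1)n$ and $p=2\max\{M_2^2,\,2M_1M_2,\,2M_1^2\}+1$. Let $a_1<a_2<\dots<a_{n+1}$ be positive integers such that all sums $a_i+a_j$ ($1\le i\le j\le n+1$) are pairwise distinct and $a_{n+1}-a_n\ge 2$ (for instance $a_k=((n+1)^2+k-1)^2$). Set $\epsilon_i=p^{a_i}$ for $i=1,\dots,n+1$, and $B_\epsilon=\epsilon_{n+1}B+E$, where $E\in\mathbb{Z}^{n\times n}$ has first row $(\epsilon_1,\dots,\epsilon_n)$ and all other rows zero. *)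

theory Defs
  imports "HOL-Analysis.Analysis"
begin

text \<open>Convention: an n x n integer matrix is a function B :: nat => nat => int, only the
entries B i j with i, j in {1..n} matter.\<close>

definition zvecs :: "nat \<Rightarrow> (nat \<Rightarrow> int) set" where
  "zvecs n = {x. \<forall>i. i \<notin> {1..n} \<longrightarrow> x i = 0}"

definition det_n :: "nat \<Rightarrow> (nat \<Rightarrow> nat \<Rightarrow> int) \<Rightarrow> int" where
  "det_n n B = (\<Sum>q | q permutes {1..n}. of_int (sign q) * (\<Prod>i=1..n. B i (q i)))"

definition nonsingular :: "nat \<Rightarrow> (nat \<Rightarrow> nat \<Rightarrow> int) \<Rightarrow> bool" where
  "nonsingular n B \<longleftrightarrow> det_n n B \<noteq> 0"

definition matvec :: "nat \<Rightarrow> (nat \<Rightarrow> nat \<Rightarrow> int) \<Rightarrow> (nat \<Rightarrow> int) \<Rightarrow> nat \<Rightarrow> int" where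
  "matvec n B x i = (\<Sum>j=1..n. B i j * x j)"

definition normsq :: "nat \<Rightarrow> (nat \<Rightarrow> nat \<Rightarrow> int) \<Rightarrow> (nat \<Rightarrow> int) \<Rightarrow> int" where
  "normsq n B x = (\<Sum>i=1..n. (matvec n B x i)^2)"

definition vlen :: "nat \<Rightarrow> (nat \<Rightarrow> nat \<Rightarrow> int) \<Rightarrow> (nat \<Rightarrow> int) \<Rightarrow> real" where
  "vlen n B x = sqrt (real_of_int (normsq n B x))"

definition lambda1 :: "nat \<Rightarrow> (nat \<Rightarrow> nat \<Rightarrow> int) \<Rightarrow> real" where
  "lambda1 n B = Inf {vlen n B x | x. x \<in> zvecs n \<and> (\<exists>i\<in>{1..n}. matvec n B x i \<noteq> 0)}"

definition SB :: "nat \<Rightarrow> (nat \<Rightarrow> nat \<Rightarrow> int) \<Rightarrow> (nat \<Rightarrow> int) set" where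
  "SB n B = {x \<in> zvecs n. vlen n B x = lambda1 n B}"

definition maxentry :: "nat \<Rightarrow> (nat \<Rightarrow> nat \<Rightarrow> int) \<Rightarrow> int" where
  "maxentry n B = Max {\<bar>B i j\<bar> | i j. i \<in> {1..n} \<and> j \<in> {1..n}}"

definition constM1 :: "nat \<Rightarrow> int \<Rightarrow> int" where
  "constM1 n M = 2 * (M + 1)^n * (int n)^n"

definition constM2 :: "nat \<Rightarrow> int \<Rightarrow> int" where
  "constM2 n M = (M + 1) * int n"

definition constp :: "nat \<Rightarrow> int \<Rightarrow> int" where
  "constp n M = 2 * Max {(constM2 n M)^2, 2 * constM1 n M * constM2 n M, 2 * (constM1 n M)^2} + 1"

definition admissible_exps :: "nat \<Rightarrow> (nat \<Rightarrow> nat) \<Rightarrow> bool" where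
  "admissible_exps n a \<longleftrightarrow>
     (\<forall>i\<in>{1..n+1}. a i > 0) \<and>
     (\<forall>i\<in>{1..n+1}. \<forall>j\<in>{1..n+1}. i < j \<longrightarrow> a i < a j) \<and>
     (\<forall>i j k l. 1 \<le> i \<and> i \<le> j \<and> j \<le> n+1 \<and> 1 \<le> k \<and> k \<le> l \<and> l \<le> n+1 \<and> (i,j) \<noteq> (k,l)
        \<longrightarrow> a i + a j \<noteq> a k + a l) \<and>
     a (n+1) \<ge> a n + 2"

definition Beps :: "nat \<Rightarrow> (nat \<Rightarrow> nat \<Rightarrow> int) \<Rightarrow> (nat \<Rightarrow> int) \<Rightarrow> nat \<Rightarrow> nat \<Rightarrow> int" where
  "Beps n B eps i j = eps (n+1) * B i j + (if i = 1 then eps j else 0)"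

end

theory Submission
  imports Defs
begin

(*
  Write E = eps(n+1), s(x) = sum_j eps_j x_j and c(x) = (Bx)_1.  Since
  B_eps x = E Bx + s(x) e_1, we have  |B_eps x|^2 = E^2 |Bx|^2 + 2 E c(x) s(x) + s(x)^2.
  By Cramer's rule every coordinate of x is bounded by n! M^(n-1) max_i |(Bx)_i|, so
  with P = p^(a n) >= |eps_j| (j <= n) and K = n n! M^(n-1) the two perturbation terms are
  at most 2 E P K |Bx|^2 and P^2 K^2 |Bx|^2.  Because E >= p^2 P and p is huge compared
  with K and lambda_1(L(B))^2 <= n M^2, a vector x that is shortest for B_eps cannot have
  |Bx|^2 > lambda_1(L(B))^2, hence S_{B_eps} is contained in S_B.  For such x all
  coordinates are bounded by (M+1)^n n^n, which gives the coefficient bounds by p/2;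
  the statements about the eps_i eps_j follow from the admissibility of the exponents.
*)

section \<open>Determinants and Cramer's rule\<close>

definition replace_col :: "(nat \<Rightarrow> nat \<Rightarrow> int) \<Rightarrow> nat \<Rightarrow> (nat \<Rightarrow> int) \<Rightarrow> nat \<Rightarrow> nat \<Rightarrow> int" where
  "replace_col A j v = (\<lambda>i l. if l = j then v i else A i l)"

text \<open>A matrix with two equal columns has determinant zero: composing with the
  transposition of these columns negates every term of the Leibniz sum.\<close>
lemma det_n_equal_columns:
  assumes j: "j \<in> {1..n}" and k: "k \<in> {1..n}" and jk: "j \<noteq> k"
    and eq: "\<And>i. A i j = A i k"
  shows "det_n n A = 0"
proof -
  let ?P = "{q. q permutes {1..n::nat}}"
  define t where "t = Transposition.transpose j k"
  have tp: "t permutes {1..n}" unfolding t_def using j k by (rule permutes_swap_id)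
  have tt: "t \<circ> t = id" unfolding t_def by (simp add: fun_eq_iff)
  have At: "A i (t l) = A i l" for i l
    unfolding t_def using eq by (auto simp: Transposition.transpose_def)
  let ?g = "\<lambda>q. of_int (sign q) * (\<Prod>i=1..n. A i (q i))"
  have "det_n n A = (\<Sum>q\<in>?P. ?g (t \<circ> q))"
    unfolding det_n_def
    by (rule sum.reindex_bij_witness[where i="\<lambda>q. t \<circ> q" and j="\<lambda>q. t \<circ> q"])
       (use tp in \<open>auto simp: comp_assoc[symmetric] tt intro: permutes_compose\<close>)
  also have "\<dots> = (\<Sum>q\<in>?P. - ?g q)"
  proof (rule sum.cong[OF refl])
    fix q assume "q \<in> ?P"
    then have q: "permutation q" using permutation_permutes by blast
    have "permutation t" using tp permutation_permutes by blast
    then have "sign (t \<circ> q) = - sign q"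
      using sign_compose[OF _ q] jk by (simp add: t_def sign_swap_id)
    then show "?g (t \<circ> q) = - ?g q" by (simp add: At)
  qed
  also have "\<dots> = - det_n n A" unfolding det_n_def by (simp add: sum_negf)
  finally show ?thesis by simp
qed

lemma prod_replace_col:
  assumes q: "q permutes {1..n}" and j: "j \<in> {1..n}"
  shows "(\<Prod>i=1..n. replace_col A j v i (q i))
       = v (inv q j) * (\<Prod>i\<in>{1..n} - {inv q j}. A i (q i))"
proof -
  let ?r = "inv q j"
  have r: "?r \<in> {1..n}" using permutes_in_image[OF permutes_inv[OF q]] j by blast
  have qr: "q ?r = j" using q by (simp add: permutes_inverses)
  have "(\<Prod>i=1..n. replace_col A j v i (q i))
      = replace_col A j v ?r (q ?r) * (\<Prod>i\<in>{1..n} - {?r}. replace_col A j v i (q i))"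
    using r by (simp add: prod.remove)
  also have "(\<Prod>i\<in>{1..n} - {?r}. replace_col A j v i (q i)) = (\<Prod>i\<in>{1..n} - {?r}. A i (q i))"
  proof (rule prod.cong[OF refl])
    fix i assume "i \<in> {1..n} - {?r}"
    then have "q i \<noteq> j" using qr permutes_inj[OF q] by (metis DiffE injD singletonI)
    then show "replace_col A j v i (q i) = A i (q i)" by (simp add: replace_col_def)
  qed
  finally show ?thesis using qr by (simp add: replace_col_def)
qed

lemma det_n_replace_col_linear:
  assumes j: "j \<in> {1..n}"
  shows "det_n n (replace_col B j (\<lambda>i. \<Sum>k=1..n. B i k * x k))
       = (\<Sum>k=1..n. x k * det_n n (replace_col B j (\<lambda>i. B i k)))"
proof -
  let ?P = "{q. q permutes {1..n::nat}}"
  let ?R = "\<lambda>q. (\<Prod>i\<in>{1..n} - {inv q j}. B i (q i))"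
  have "det_n n (replace_col B j (\<lambda>i. \<Sum>k=1..n. B i k * x k))
      = (\<Sum>q\<in>?P. sign q * ((\<Sum>k=1..n. B (inv q j) k * x k) * ?R q))"
    unfolding det_n_def
    by (rule sum.cong[OF refl]) (simp add: prod_replace_col[OF _ j] del: One_nat_def)
  also have "\<dots> = (\<Sum>q\<in>?P. \<Sum>k=1..n. x k * (sign q * (B (inv q j) k * ?R q)))"
    by (rule sum.cong[OF refl]) (simp add: sum_distrib_left sum_distrib_right algebra_simps)
  also have "\<dots> = (\<Sum>k=1..n. x k * (\<Sum>q\<in>?P. sign q * (B (inv q j) k * ?R q)))"
    by (subst sum.swap) (simp add: sum_distrib_left)
  also have "\<dots> = (\<Sum>k=1..n. x k * det_n n (replace_col B j (\<lambda>i. B i k)))"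
    unfolding det_n_def
    by (rule sum.cong[OF refl]) (simp add: prod_replace_col[OF _ j] del: One_nat_def)
  finally show ?thesis .
qed

lemma cramer:
  assumes j: "j \<in> {1..n}"
  shows "det_n n (replace_col B j (matvec n B x)) = x j * det_n n B"
proof -
  have mv: "matvec n B x = (\<lambda>i. \<Sum>k=1..n. B i k * x k)" by (simp add: fun_eq_iff matvec_def)
  have other_cols: "det_n n (replace_col B j (\<lambda>i. B i k)) = 0" if "k \<in> {1..n} - {j}" for k
    by (rule det_n_equal_columns[of j n k]) (use j that in \<open>auto simp: replace_col_def\<close>)
  have "det_n n (replace_col B j (matvec n B x))
      = (\<Sum>k=1..n. x k * det_n n (replace_col B j (\<lambda>i. B i k)))"
    unfolding mv by (rule det_n_replace_col_linear[OF j])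
  also have "\<dots> = x j * det_n n (replace_col B j (\<lambda>i. B i j))
      + (\<Sum>k\<in>{1..n}-{j}. x k * det_n n (replace_col B j (\<lambda>i. B i k)))"
    using j by (simp add: sum.remove)
  also have "replace_col B j (\<lambda>i. B i j) = B" by (simp add: replace_col_def fun_eq_iff)
  finally show ?thesis by (simp add: other_cols)
qed

text \<open>Crude size bound: n! Leibniz terms, each a product of n-1 entries of A and one of v.\<close>
lemma det_n_replace_col_bound:
  assumes j: "j \<in> {1..n}" and v: "\<And>i. i \<in> {1..n} \<Longrightarrow> \<bar>v i\<bar> \<le> m"
    and A: "\<And>i l. i \<in> {1..n} \<Longrightarrow> l \<in> {1..n} \<Longrightarrow> \<bar>A i l\<bar> \<le> M"
    and M: "0 \<le> M"
  shows "\<bar>det_n n (replace_col A j v)\<bar> \<le> fact n * M^(n-1) * m"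
proof -
  let ?P = "{q. q permutes {1..n::nat}}"
  have term_bound: "\<bar>of_int (sign q) * (\<Prod>i=1..n. replace_col A j v i (q i))\<bar> \<le> M^(n-1) * m"
    if "q \<in> ?P" for q
  proof -
    have q: "q permutes {1..n}" using that by simp
    let ?r = "inv q j"
    have r: "?r \<in> {1..n}" using permutes_in_image[OF permutes_inv[OF q]] j by blast
    have "\<bar>\<Prod>i\<in>{1..n} - {?r}. A i (q i)\<bar> = (\<Prod>i\<in>{1..n} - {?r}. \<bar>A i (q i)\<bar>)"
      by (simp add: abs_prod)
    also have "\<dots> \<le> (\<Prod>i\<in>{1..n} - {?r}. M)"
      by (rule prod_mono) (use A permutes_in_image[OF q] in auto)
    also have "\<dots> = M^(n-1)" using r by simp
    finally have R: "\<bar>\<Prod>i\<in>{1..n} - {?r}. A i (q i)\<bar> \<le> M^(n-1)" .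
    have "\<bar>of_int (sign q) * (\<Prod>i=1..n. replace_col A j v i (q i))\<bar>
        = \<bar>v ?r\<bar> * \<bar>\<Prod>i\<in>{1..n} - {?r}. A i (q i)\<bar>"
      by (simp add: prod_replace_col[OF q j] abs_mult sign_def del: One_nat_def)
    also have "\<dots> \<le> m * M^(n-1)" by (rule mult_mono) (use v[OF r] R in auto)
    finally show ?thesis by (simp add: mult.commute)
  qed
  have "\<bar>det_n n (replace_col A j v)\<bar>
      \<le> (\<Sum>q\<in>?P. \<bar>of_int (sign q) * (\<Prod>i=1..n. replace_col A j v i (q i))\<bar>)"
    unfolding det_n_def by (rule sum_abs)
  also have "\<dots> \<le> of_nat (card ?P) * (M^(n-1) * m)"
    by (rule sum_bounded_above) (rule term_bound)
  also have "card ?P = fact n" by (rule card_permutations) auto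
  finally show ?thesis by (simp add: mult.assoc)
qed

text \<open>For nonsingular integer B, |det B| >= 1, so Cramer's rule bounds the coordinates of x
  by those of Bx.\<close>
lemma coordinate_bound:
  assumes ns: "nonsingular n B" and j: "j \<in> {1..n}"
    and Bx: "\<And>i. i \<in> {1..n} \<Longrightarrow> \<bar>matvec n B x i\<bar> \<le> m"
    and A: "\<And>i l. i \<in> {1..n} \<Longrightarrow> l \<in> {1..n} \<Longrightarrow> \<bar>B i l\<bar> \<le> M"
    and M: "0 \<le> M"
  shows "\<bar>x j\<bar> \<le> fact n * M^(n-1) * m"
proof -
  have "1 \<le> \<bar>det_n n B\<bar>" using ns unfolding nonsingular_def by linarith
  then have "\<bar>x j\<bar> \<le> \<bar>x j\<bar> * \<bar>det_n n B\<bar>"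
    by (metis abs_ge_zero mult_le_cancel_left1 not_le)
  also have "\<dots> = \<bar>det_n n (replace_col B j (matvec n B x))\<bar>" by (simp add: cramer[OF j] abs_mult)
  also have "\<dots> \<le> fact n * M^(n-1) * m" by (rule det_n_replace_col_bound[OF j Bx A M])
  finally show ?thesis .
qed

section \<open>Shortest lattice vectors\<close>

definition nonzero_image :: "nat \<Rightarrow> (nat \<Rightarrow> nat \<Rightarrow> int) \<Rightarrow> (nat \<Rightarrow> int) \<Rightarrow> bool" where
  "nonzero_image n B x \<longleftrightarrow> (\<exists>i\<in>{1..n}. matvec n B x i \<noteq> 0)"

lemma nonsingular_kernel:
  assumes ns: "nonsingular n B" and j: "j \<in> {1..n}" and "\<not> nonzero_image n B x"
  shows "x j = 0"
proof -
  define M where "M = (\<Sum>i=1..n. \<Sum>l=1..n. \<bar>B i l\<bar>)"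
  have "\<bar>B i l\<bar> \<le> M" if "i \<in> {1..n}" "l \<in> {1..n}" for i l
  proof -
    have "\<bar>B i l\<bar> \<le> (\<Sum>l'=1..n. \<bar>B i l'\<bar>)" by (rule member_le_sum) (use that in auto)
    also have "\<dots> \<le> M" unfolding M_def by (rule member_le_sum) (use that in \<open>auto intro: sum_nonneg\<close>)
    finally show ?thesis .
  qed
  moreover have "0 \<le> M" unfolding M_def by (intro sum_nonneg) auto
  ultimately have M: "\<And>i l. i \<in> {1..n} \<Longrightarrow> l \<in> {1..n} \<Longrightarrow> \<bar>B i l\<bar> \<le> M" "0 \<le> M" by auto
  have "\<bar>x j\<bar> \<le> fact n * M^(n-1) * 0"
    by (rule coordinate_bound[OF ns j _ M]) (use assms(3) in \<open>simp add: nonzero_image_def\<close>)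
  then show ?thesis by simp
qed

lemma normsq_nonneg: "0 \<le> normsq n B x"
  unfolding normsq_def by (intro sum_nonneg) auto

lemma component_le_normsq: "i \<in> {1..n} \<Longrightarrow> (matvec n B x i)^2 \<le> normsq n B x"
  unfolding normsq_def by (rule member_le_sum) auto

lemma normsq_ge_1: "nonzero_image n B x \<Longrightarrow> 1 \<le> normsq n B x"
proof -
  assume "nonzero_image n B x"
  then obtain i where i: "i \<in> {1..n}" "matvec n B x i \<noteq> 0"
    unfolding nonzero_image_def by blast
  then have "1 \<le> \<bar>matvec n B x i\<bar>" by linarith
  then have "1 \<le> \<bar>matvec n B x i\<bar>^2" by (rule one_le_power)
  then show ?thesis using component_le_normsq[OF i(1), of B x] by simp
qed

lemma nonzero_image_if_normsq_pos: "0 < normsq n B x \<Longrightarrow> nonzero_image n B x"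
  unfolding nonzero_image_def normsq_def by (metis (no_types, lifting) power_zero_numeral sum.neutral less_irrefl)

text \<open>The infimum defining lambda_1 is attained, since squared norms are natural numbers.\<close>
lemma shortest_vector_exists:
  assumes "x0 \<in> zvecs n" "nonzero_image n B x0"
  obtains y where "y \<in> zvecs n" "nonzero_image n B y"
    "\<And>x. x \<in> zvecs n \<Longrightarrow> nonzero_image n B x \<Longrightarrow> normsq n B y \<le> normsq n B x"
    "lambda1 n B = vlen n B y"
proof -
  obtain y where y: "y \<in> zvecs n \<and> nonzero_image n B y"
    and least: "\<forall>x. x \<in> zvecs n \<and> nonzero_image n B x \<longrightarrow> nat (normsq n B y) \<le> nat (normsq n B x)"
    using ex_has_least_nat[of "\<lambda>x. x \<in> zvecs n \<and> nonzero_image n B x" x0 "\<lambda>x. nat (normsq n B x)"]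
      assms by blast
  have min: "normsq n B y \<le> normsq n B x" if "x \<in> zvecs n" "nonzero_image n B x" for x
    using least that normsq_nonneg by (metis nat_le_eq_zle)
  have "lambda1 n B = vlen n B y"
    unfolding lambda1_def
  proof (rule cInf_eq_minimum)
    show "vlen n B y \<in> {vlen n B x |x. x \<in> zvecs n \<and> (\<exists>i\<in>{1..n}. matvec n B x i \<noteq> 0)}"
      using y unfolding nonzero_image_def by blast
    fix v assume "v \<in> {vlen n B x |x. x \<in> zvecs n \<and> (\<exists>i\<in>{1..n}. matvec n B x i \<noteq> 0)}"
    then obtain x where "v = vlen n B x" "x \<in> zvecs n" "nonzero_image n B x"
      unfolding nonzero_image_def by blast
    then show "vlen n B y \<le> v" unfolding vlen_def using min by simp
  qed
  then show ?thesis using that y min by blast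
qed

lemma SB_iff_normsq:
  assumes "lambda1 n B = vlen n B y"
  shows "x \<in> SB n B \<longleftrightarrow> x \<in> zvecs n \<and> normsq n B x = normsq n B y"
  unfolding SB_def assms vlen_def using normsq_nonneg[of n B] by auto

lemma normsq_first_unit:
  assumes "n \<ge> 1"
  shows "normsq n B (\<lambda>i. if i = 1 then 1 else 0) = (\<Sum>i=1..n. (B i 1)^2)"
  unfolding normsq_def matvec_def using assms
  by (simp add: if_distrib[of "\<lambda>x. B _ _ * x"] cong: if_cong)

section \<open>The squared norm of B_eps x\<close>

lemma matvec_Beps:
  "matvec n (Beps n B eps) x i
     = eps (n+1) * matvec n B x i + (if i = 1 then (\<Sum>j=1..n. eps j * x j) else 0)"
  unfolding matvec_def Beps_def
  by (cases "i = 1") (simp_all add: algebra_simps sum.distrib sum_distrib_left)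

lemma normsq_Beps:
  assumes "n \<ge> 1"
  shows "normsq n (Beps n B eps) x = eps (n+1)^2 * normsq n B x
     + 2 * eps (n+1) * matvec n B x 1 * (\<Sum>j=1..n. eps j * x j) + (\<Sum>j=1..n. eps j * x j)^2"
proof -
  define E where "E = eps (n+1)"
  define s where "s = (\<Sum>j=1..n. eps j * x j)"
  have "normsq n (Beps n B eps) x = (\<Sum>i=1..n. E^2 * (matvec n B x i)^2
      + (if i = 1 then 2 * E * matvec n B x i * s + s^2 else 0))"
    unfolding normsq_def matvec_Beps E_def[symmetric] s_def[symmetric]
    by (rule sum.cong[OF refl]) (simp add: power2_eq_square algebra_simps)
  also have "\<dots> = E^2 * normsq n B x + (2 * E * matvec n B x 1 * s + s^2)"
    using assms by (simp add: sum.distrib normsq_def sum_distrib_left sum.delta')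
  finally show ?thesis unfolding E_def s_def by simp
qed

lemma square_of_sum:
  "(\<Sum>i=1..(n::nat). (f i::int))^2
     = (\<Sum>i=1..n. (f i)^2) + (\<Sum>i=1..n. \<Sum>j\<in>{i<..n}. 2 * f i * f j)"
proof (induction n)
  case 0 then show ?case by simp
next
  case (Suc n)
  have split: "{i<..Suc n} = insert (Suc n) {i<..n}" if "i \<le> n" for i
    using that by auto
  have "(\<Sum>i=1..Suc n. \<Sum>j\<in>{i<..Suc n}. 2 * f i * f j)
      = (\<Sum>i=1..n. 2 * f i * f (Suc n) + (\<Sum>j\<in>{i<..n}. 2 * f i * f j))"
    by (simp add: split)
  also have "\<dots> = (\<Sum>i=1..n. \<Sum>j\<in>{i<..n}. 2 * f i * f j) + 2 * (\<Sum>i=1..n. f i) * f (Suc n)"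
    by (simp add: sum.distrib sum_distrib_left sum_distrib_right algebra_simps)
  finally show ?case using Suc.IH by (simp add: power2_eq_square algebra_simps)
qed

lemma normsq_Beps_expansion:
  assumes "n \<ge> 1"
  shows "normsq n (Beps n B eps) x = normsq n B x * eps (n+1)^2
         + (\<Sum>i=1..n. (x i)^2 * (eps i)^2)
         + (\<Sum>i=1..n. 2 * (\<Sum>k=1..n. B 1 k * x k) * x i * eps (n+1) * eps i)
         + (\<Sum>i=1..n. \<Sum>j\<in>{i<..n}. 2 * x i * x j * eps i * eps j)"
proof -
  have "(\<Sum>j=1..n. eps j * x j)^2 = (\<Sum>i=1..n. (x i)^2 * (eps i)^2)
      + (\<Sum>i=1..n. \<Sum>j\<in>{i<..n}. 2 * x i * x j * eps i * eps j)"
    unfolding square_of_sum[of "\<lambda>j. eps j * x j"] by (simp add: power_mult_distrib algebra_simps)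
  moreover have "(\<Sum>k=1..n. B 1 k * x k) = matvec n B x 1" by (simp add: matvec_def)
  then have "2 * eps (n+1) * matvec n B x 1 * (\<Sum>j=1..n. eps j * x j)
      = (\<Sum>i=1..n. 2 * (\<Sum>k=1..n. B 1 k * x k) * x i * eps (n+1) * eps i)"
    by (simp add: sum_distrib_left algebra_simps)
  ultimately show ?thesis unfolding normsq_Beps[OF assms] by (simp add: algebra_simps)
qed

lemma normsq_Beps_bounds:
  assumes n: "n \<ge> 1" and ns: "nonsingular n B"
    and A: "\<And>i l. i \<in> {1..n} \<Longrightarrow> l \<in> {1..n} \<Longrightarrow> \<bar>B i l\<bar> \<le> M"
    and M: "0 \<le> M" and P: "0 \<le> P" and E: "0 \<le> eps (n+1)"
    and e: "\<And>j. j \<in> {1..n} \<Longrightarrow> \<bar>eps j\<bar> \<le> P"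
  defines "K \<equiv> int n * fact n * M^(n-1)"
  shows "eps (n+1)^2 * normsq n B x - 2 * eps (n+1) * P * K * normsq n B x
           \<le> normsq n (Beps n B eps) x"
    and "normsq n (Beps n B eps) x \<le> eps (n+1)^2 * normsq n B x
           + 2 * eps (n+1) * P * K * normsq n B x + P^2 * K^2 * normsq n B x"
proof -
  define E where "E = eps (n+1)"
  define s where "s = (\<Sum>j=1..n. eps j * x j)"
  define U where "U = normsq n B x"
  define c where "c = matvec n B x 1"
  define m where "m = Max ((\<lambda>i. \<bar>matvec n B x i\<bar>) ` {1..n})"
  have um: "\<bar>matvec n B x i\<bar> \<le> m" if "i \<in> {1..n}" for i
    unfolding m_def using that by (intro Max_ge) auto
  have "m \<in> (\<lambda>i. \<bar>matvec n B x i\<bar>) ` {1..n}" unfolding m_def using n by (intro Max_in) auto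
  then obtain i0 where i0: "i0 \<in> {1..n}" "m = \<bar>matvec n B x i0\<bar>" by blast
  have m0: "0 \<le> m" using i0 by simp
  have mU: "m^2 \<le> U" unfolding U_def i0(2) using component_le_normsq[OF i0(1)] by simp
  have K0: "0 \<le> K" unfolding K_def using M by simp
  have cm: "\<bar>c\<bar> \<le> m" unfolding c_def using um n by simp
  have sb: "\<bar>s\<bar> \<le> P * K * m"
  proof -
    have "\<bar>s\<bar> \<le> (\<Sum>j=1..n. \<bar>eps j\<bar> * \<bar>x j\<bar>)" unfolding s_def abs_mult[symmetric] by (rule sum_abs)
    also have "\<dots> \<le> (\<Sum>j=1..n. P * (fact n * M^(n-1) * m))"
      by (rule sum_mono, rule mult_mono) (use e coordinate_bound[OF ns _ um A M] P in auto)
    also have "\<dots> = P * K * m" unfolding K_def by simp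
    finally show ?thesis .
  qed
  have "\<bar>c * s\<bar> \<le> m * (P * K * m)" unfolding abs_mult by (rule mult_mono[OF cm sb]) (use m0 in auto)
  also have "\<dots> = (P * K) * m^2" by (simp add: power2_eq_square algebra_simps)
  also have "\<dots> \<le> (P * K) * U" by (rule mult_left_mono[OF mU]) (use P K0 in simp)
  finally have "\<bar>c * s\<bar> \<le> P * K * U" .
  then have cs: "\<bar>2 * E * c * s\<bar> \<le> 2 * E * P * K * U"
    using E mult_left_mono[of "\<bar>c * s\<bar>" "P * K * U" "2 * E"]
    by (simp add: E_def abs_mult algebra_simps)
  have "s^2 \<le> (P * K * m)^2" using sb by (metis abs_ge_zero power2_abs power_mono)
  also have "\<dots> = P^2 * K^2 * m^2" by (simp add: power_mult_distrib)
  also have "\<dots> \<le> P^2 * K^2 * U" by (rule mult_left_mono[OF mU]) simp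
  finally have ss: "s^2 \<le> P^2 * K^2 * U" .
  have N: "normsq n (Beps n B eps) x = E^2 * U + 2 * E * c * s + s^2"
    unfolding E_def U_def c_def s_def using normsq_Beps[OF n] by simp
  show "E^2 * U - 2 * E * P * K * U \<le> normsq n (Beps n B eps) x"
    unfolding N using cs by (smt (verit) zero_le_power2)
  show "normsq n (Beps n B eps) x \<le> E^2 * U + 2 * E * P * K * U + P^2 * K^2 * U"
    unfolding N using cs ss by linarith
qed

section \<open>Arithmetic\<close>

lemma fact_le_pow: "n \<ge> 1 \<Longrightarrow> fact n \<le> (n::nat)^(n-1)"
proof (induction n)
  case 0 then show ?case by simp
next
  case (Suc m)
  show ?case
  proof (cases "m = 0")
    case True then show ?thesis by simp
  next
    case False
    then have "fact m \<le> m^(m-1)" using Suc by simp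
    also have "\<dots> \<le> (Suc m)^(m-1)" by (rule power_mono) auto
    finally have "Suc m * fact m \<le> Suc m * (Suc m)^(m-1)" by (rule mult_left_mono) simp
    also have "\<dots> = (Suc m)^m" using False by (cases m) auto
    finally show ?thesis by simp
  qed
qed

lemma perturbation_small:
  fixes p K L Q M n :: int
  assumes "0 \<le> K" "K \<le> Q" "0 \<le> M" "K * M \<le> Q" "1 \<le> n" "n \<le> Q" "L \<le> n * M^2" "0 \<le> L"
    "n * M \<le> Q" "16 * Q^2 < p"
  shows "2 * K * (2 * L + 1) + K^2 * L < p^2"
proof -
  have Q1: "1 \<le> Q" using assms by linarith
  have "K^2 * L \<le> K^2 * (n * M^2)" by (rule mult_left_mono) (use assms in auto)
  also have "\<dots> = n * (K * M)^2" by (simp add: power_mult_distrib algebra_simps)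
  also have "\<dots> \<le> Q * Q^2" by (rule mult_mono) (use assms in \<open>auto intro: power_mono\<close>)
  finally have a: "K^2 * L \<le> Q^3" by (simp add: power_numeral_reduce)
  have "L \<le> n * M^2" by fact
  also have "\<dots> \<le> n * n * M^2" by (rule mult_right_mono) (use assms in auto)
  also have "\<dots> = (n * M)^2" by (simp add: power2_eq_square)
  also have "\<dots> \<le> Q^2" by (rule power_mono) (use assms in auto)
  finally have LQ: "L \<le> Q^2" .
  have "2 * K * (2 * L + 1) \<le> 2 * Q * (2 * Q^2 + 1)" by (rule mult_mono) (use assms LQ in auto)
  moreover have "Q \<le> Q^3" using Q1 by (simp add: power_numeral_reduce)
      (metis mult_le_cancel_left1 one_le_power power2_eq_square less_le_trans not_le zero_less_one)
  ultimately have b: "2 * K * (2 * L + 1) \<le> 6 * Q^3" by (simp add: algebra_simps power_numeral_reduce)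
  have "7 * Q^3 \<le> 256 * Q^4" using Q1 by (simp add: power_numeral_reduce)
  also have "256 * Q^4 = (16 * Q^2)^2" by (simp add: power_mult_distrib flip: power_mult)
  also have "\<dots> < p^2" by (rule power_strict_mono) (use assms Q1 in auto)
  finally show ?thesis using a b by linarith
qed

text \<open>Otherwise (L+1)(E^2 - 2EPK) <= (E^2 + 2EPK + P^2K^2) L, i.e.
  E^2 <= E P (2K(2L+1)) + P^2 K^2 L <= E P (2K(2L+1) + K^2 L) < E P p^2 <= E^2.\<close>
lemma normsq_comparison:
  fixes E P K L U Nx Ny p :: int
  assumes pE: "p^2 * P \<le> E" and P1: "1 \<le> P" and K0: "0 \<le> K"
    and small: "2*K*(2*L+1) + K^2*L < p^2" and L0: "0 \<le> L"
    and lo: "E^2*U - 2*E*P*K*U \<le> Nx" and up: "Ny \<le> E^2*L + 2*E*P*K*L + P^2*K^2*L"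
    and NN: "Nx \<le> Ny"
  shows "U \<le> L"
proof (rule ccontr)
  assume "\<not> U \<le> L"
  then have U1: "L + 1 \<le> U" by simp
  have twoK: "2 * K < p^2"
    using small K0 L0 mult_le_cancel_left1[of "2*K" "2*L+1"] by (smt (verit) zero_le_mult_iff zero_le_power2)
  have "P * (2 * K) \<le> P * p^2" by (rule mult_left_mono) (use twoK P1 in auto)
  then have EPK: "2 * P * K \<le> E" using pE by (simp add: algebra_simps)
  have PE: "P \<le> E" using pE P1 twoK K0 EPK by (smt (verit) mult_le_cancel_right1)
  have E0: "0 < E" using PE P1 by linarith
  have D0: "0 \<le> E^2 - 2*E*P*K"
    using mult_left_mono[OF EPK, of E] E0 by (simp add: power2_eq_square algebra_simps)
  have "(L+1) * (E^2 - 2*E*P*K) \<le> U * (E^2 - 2*E*P*K)" by (rule mult_right_mono[OF U1 D0])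
  also have "\<dots> = E^2*U - 2*E*P*K*U" by (simp add: algebra_simps)
  finally have "(L+1) * (E^2 - 2*E*P*K) \<le> E^2*L + 2*E*P*K*L + P^2*K^2*L"
    using lo NN up by linarith
  then have st: "E^2 \<le> E*P*(2*K*(2*L+1)) + P^2*K^2*L" by (simp add: algebra_simps)
  have "P*(P*(K^2*L)) \<le> E*(P*(K^2*L))" by (rule mult_right_mono[OF PE]) (use P1 L0 in simp)
  then have "P^2*K^2*L \<le> E*P*(K^2*L)" by (simp add: power2_eq_square algebra_simps)
  moreover have "E*(p^2*P) \<le> E^2" using pE E0 by (simp add: power2_eq_square)
  ultimately have "E*P*p^2 \<le> E*P*(2*K*(2*L+1) + K^2*L)" using st by (simp add: algebra_simps)
  then have "p^2 \<le> 2*K*(2*L+1) + K^2*L" using E0 P1 by simp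
  then show False using small by simp
qed

section \<open>The construction\<close>

locale construction =
  fixes n :: nat and B :: "nat \<Rightarrow> nat \<Rightarrow> int" and a :: "nat \<Rightarrow> nat"
    and M p :: int and eps :: "nat \<Rightarrow> int" and Be :: "nat \<Rightarrow> nat \<Rightarrow> int"
  assumes n_pos: "n \<ge> 1" and nonsing: "nonsingular n B" and adm: "admissible_exps n a"
    and M_eq: "M = maxentry n B" and p_eq: "p = constp n M"
    and eps_eq: "eps = (\<lambda>i. p ^ a i)" and Be_eq: "Be = Beps n B eps"
begin

text \<open>Q = (M+1)^n n^n, so that M_1 = 2Q; K = n n! M^(n-1) is the Cramer constant of
  normsq_Beps_bounds; P = p^(a_n) bounds eps_1, ..., eps_n.\<close>
definition Q :: int where "Q = (M+1)^n * int n ^ n"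
definition K :: int where "K = int n * fact n * M^(n-1)"
definition P :: int where "P = p ^ a n"

lemma entry_bound:
  assumes "i \<in> {1..n}" "l \<in> {1..n}"
  shows "\<bar>B i l\<bar> \<le> M"
proof -
  have "finite {\<bar>B i l\<bar> | i l. i \<in> {1..n} \<and> l \<in> {1..n}}" by (rule finite_image_set2) auto
  then show ?thesis unfolding M_eq maxentry_def by (rule Max_ge) (use assms in auto)
qed

lemma M_nonneg: "0 \<le> M"
  using entry_bound[of 1 1] n_pos by force

lemma Q_bounds:
  shows "1 \<le> Q" and "0 \<le> K" and "K \<le> Q" and "K * M \<le> Q" and "int n * M \<le> Q" and "int n \<le> Q"
proof -
  have M0: "0 \<le> M" by (rule M_nonneg)
  have n_le: "int n \<le> int n ^ n" using power_increasing[of 1 n "int n"] n_pos by simp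
  have M1_le: "1 \<le> (M+1)^n" using M0 by (simp add: one_le_power)
  have M_le: "M \<le> (M+1)^n" using power_increasing[of 1 n "M+1"] n_pos M0 by simp
  have fact_le: "int n * fact n \<le> int n ^ n"
  proof -
    have "n * fact n \<le> n * n^(n-1)" using fact_le_pow[OF n_pos] by simp
    also have "\<dots> = n^n" using n_pos by (cases n) auto
    finally show ?thesis by (metis of_nat_fact of_nat_le_iff of_nat_mult of_nat_power)
  qed
  have "int n \<le> 1 * int n ^ n" using n_le by simp
  also have "\<dots> \<le> (M+1)^n * int n ^ n" by (rule mult_right_mono[OF M1_le]) simp
  finally show "int n \<le> Q" unfolding Q_def .
  then show "1 \<le> Q" using n_pos by simp
  show "0 \<le> K" unfolding K_def using M0 by simp
  have "M^(n-1) \<le> (M+1)^n"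
    using power_mono[of M "M+1" "n-1"] power_increasing[of "n-1" n "M+1"] M0 by simp
  then have "int n * fact n * M^(n-1) \<le> int n ^ n * (M+1)^n"
    by (rule mult_mono[OF fact_le]) (use M0 in auto)
  then show "K \<le> Q" unfolding K_def Q_def by (simp add: mult.commute)
  have "K * M = (int n * fact n) * M^n" unfolding K_def using n_pos
    by (cases n) (simp_all add: algebra_simps)
  also have "\<dots> \<le> int n ^ n * (M+1)^n" by (rule mult_mono[OF fact_le]) (use M0 in \<open>auto intro: power_mono\<close>)
  finally show "K * M \<le> Q" unfolding Q_def by (simp add: mult.commute)
  show "int n * M \<le> Q" unfolding Q_def using mult_mono[OF n_le M_le] M0 by (simp add: mult.commute)
qed

lemma p_bounds:
  shows "(int n * (M+1))^2 \<le> p div 2" and "4 * Q * (int n * (M+1)) \<le> p div 2"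
    and "8 * Q^2 \<le> p div 2" and "16 * Q^2 < p" and "1 < p"
proof -
  have odd: "p = 2 * (p div 2) + 1" unfolding p_eq constp_def by simp
  have p: "p div 2 = Max {(constM2 n M)^2, 2 * constM1 n M * constM2 n M, 2 * (constM1 n M)^2}"
    unfolding p_eq constp_def by simp
  have M1: "constM1 n M = 2 * Q" and M2: "constM2 n M = int n * (M+1)"
    unfolding constM1_def constM2_def Q_def by (simp_all add: mult.commute)
  show "(int n * (M+1))^2 \<le> p div 2" and "4 * Q * (int n * (M+1)) \<le> p div 2"
    and Q8: "8 * Q^2 \<le> p div 2"
    unfolding p M1 M2 by (auto simp: power_mult_distrib)
  then show "16 * Q^2 < p" using odd by linarith
  moreover have "1 \<le> Q^2" using Q_bounds(1) by (simp add: one_le_power)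
  ultimately show "1 < p" by linarith
qed

lemma eps_bounds:
  shows "1 \<le> P" and "\<And>j. j \<in> {1..n} \<Longrightarrow> \<bar>eps j\<bar> \<le> P"
    and "p^2 * P \<le> eps (n+1)" and "0 \<le> eps (n+1)"
proof -
  have p1: "1 < p" by (rule p_bounds(5))
  have increasing: "\<forall>i\<in>{1..n+1}. \<forall>j\<in>{1..n+1}. i < j \<longrightarrow> a i < a j" and gap: "a n + 2 \<le> a (n+1)"
    using adm unfolding admissible_exps_def by auto
  show "1 \<le> P" unfolding P_def using p1 by (simp add: one_le_power)
  show "\<bar>eps j\<bar> \<le> P" if "j \<in> {1..n}" for j
  proof -
    have "a j \<le> a n" using increasing that by (cases "j = n") (auto intro: less_imp_le)
    then show ?thesis unfolding eps_eq P_def using p1 by (simp add: power_increasing)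
  qed
  have "p^2 * P = p^(a n + 2)" unfolding P_def by (simp add: power_add power2_eq_square mult.commute)
  also have "\<dots> \<le> eps (n+1)" unfolding eps_eq by (rule power_increasing) (use gap p1 in auto)
  finally show "p^2 * P \<le> eps (n+1)" .
  show "0 \<le> eps (n+1)" unfolding eps_eq using p1 by simp
qed

text \<open>A shortest vector of L(B) exists and has squared length at most |B e_1|^2 <= n M^2.\<close>
lemma shortest_B_vector:
  obtains y where "y \<in> zvecs n" "nonzero_image n B y"
    "\<And>x. x \<in> zvecs n \<Longrightarrow> nonzero_image n B x \<Longrightarrow> normsq n B y \<le> normsq n B x"
    "lambda1 n B = vlen n B y" "normsq n B y \<le> int n * M^2"
proof -
  define e1 where "e1 = (\<lambda>i::nat. if i = 1 then 1 else (0::int))"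
  have e1: "e1 \<in> zvecs n" unfolding e1_def zvecs_def using n_pos by auto
  have "nonzero_image n B e1"
    using nonsingular_kernel[OF nonsing, of 1 e1] n_pos unfolding e1_def by auto
  then obtain y where y: "y \<in> zvecs n" "nonzero_image n B y"
    "\<And>x. x \<in> zvecs n \<Longrightarrow> nonzero_image n B x \<Longrightarrow> normsq n B y \<le> normsq n B x"
    "lambda1 n B = vlen n B y"
    using shortest_vector_exists[OF e1] by blast
  have "normsq n B y \<le> normsq n B e1" using y(3) e1 \<open>nonzero_image n B e1\<close> .
  also have "\<dots> = (\<Sum>i=1..n. (B i 1)^2)" unfolding e1_def by (rule normsq_first_unit[OF n_pos])
  also have "\<dots> \<le> (\<Sum>i=1..n. M^2)"
  proof (rule sum_mono)
    fix i assume "i \<in> {1..n}"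
    then have "\<bar>B i 1\<bar> \<le> M" using entry_bound n_pos by simp
    then show "(B i 1)^2 \<le> M^2" by (metis abs_ge_zero power2_abs power_mono)
  qed
  finally have "normsq n B y \<le> int n * M^2" by simp
  then show ?thesis using that[OF y] by blast
qed

lemma SB_normsq_bound:
  assumes "x \<in> SB n B"
  shows "normsq n B x \<le> int n * M^2"
proof (rule shortest_B_vector)
  fix y assume "lambda1 n B = vlen n B y" "normsq n B y \<le> int n * M^2"
  then show ?thesis using assms SB_iff_normsq by simp
qed

lemma perturbation_coefficient:
  assumes "0 \<le> L" "L \<le> int n * M^2"
  shows "2 * K * (2 * L + 1) + K^2 * L < p^2"
  using perturbation_small[OF Q_bounds(2,3) M_nonneg Q_bounds(4) _ Q_bounds(6) assms(2,1)
      Q_bounds(5) p_bounds(4)] n_pos by simp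

lemma Be_sandwich:
  shows "eps (n+1)^2 * normsq n B x - 2 * eps (n+1) * P * K * normsq n B x \<le> normsq n Be x"
    and "normsq n Be x \<le> eps (n+1)^2 * normsq n B x
           + 2 * eps (n+1) * P * K * normsq n B x + P^2 * K^2 * normsq n B x"
proof -
  have "0 \<le> P" using eps_bounds(1) by simp
  note bounds = normsq_Beps_bounds[where eps=eps, OF n_pos nonsing entry_bound M_nonneg this eps_bounds(4) eps_bounds(2)]
  show "eps (n+1)^2 * normsq n B x - 2 * eps (n+1) * P * K * normsq n B x \<le> normsq n Be x"
    unfolding Be_eq K_def by (rule bounds(1))
  show "normsq n Be x \<le> eps (n+1)^2 * normsq n B x
           + 2 * eps (n+1) * P * K * normsq n B x + P^2 * K^2 * normsq n B x"
    unfolding Be_eq K_def by (rule bounds(2))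
qed

text \<open>Bx = 0 forces x = 0 and hence B_eps x = 0; conversely, B_eps x is not zero when Bx is not,
  because the leading term E^2 |Bx|^2 dominates.\<close>
lemma Be_nonzero_iff: "nonzero_image n Be x \<longleftrightarrow> nonzero_image n B x"
proof
  assume Be: "nonzero_image n Be x"
  show "nonzero_image n B x"
  proof (rule ccontr)
    assume "\<not> nonzero_image n B x"
    then have "\<And>j. j \<in> {1..n} \<Longrightarrow> x j = 0" using nonsingular_kernel[OF nonsing] by blast
    then have "\<And>i. matvec n Be x i = 0" unfolding matvec_def by simp
    then show False using Be unfolding nonzero_image_def by simp
  qed
next
  assume "nonzero_image n B x"
  then have U: "1 \<le> normsq n B x" by (rule normsq_ge_1)
  have "2 * K < p^2" using perturbation_coefficient[of 0] by simp
  then have "P * (2 * K) < P * p^2" using eps_bounds(1) by simp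
  then have "0 < eps (n+1) - 2 * P * K" using eps_bounds(3) by (simp add: algebra_simps)
  moreover have "0 < eps (n+1)" using calculation Q_bounds(2) eps_bounds(1) by (smt (verit) mult_nonneg_nonneg)
  ultimately have "0 < normsq n B x * (eps (n+1) * (eps (n+1) - 2 * P * K))" using U by simp
  then have "0 < normsq n Be x" using Be_sandwich(1)[of x] by (simp add: algebra_simps power2_eq_square)
  then show "nonzero_image n Be x" by (rule nonzero_image_if_normsq_pos)
qed

lemma SB_Be_subset:
  assumes x: "x \<in> SB n Be"
  shows "x \<in> SB n B" and "(lambda1 n Be)^2 = real_of_int (normsq n Be x)"
proof -
  obtain y where y: "y \<in> zvecs n" "nonzero_image n B y"
    "\<And>x. x \<in> zvecs n \<Longrightarrow> nonzero_image n B x \<Longrightarrow> normsq n B y \<le> normsq n B x"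
    "lambda1 n B = vlen n B y" "normsq n B y \<le> int n * M^2"
    using shortest_B_vector by blast
  define L where "L = normsq n B y"
  have "nonzero_image n Be y" using y(2) Be_nonzero_iff by simp
  then obtain z where z: "z \<in> zvecs n" "nonzero_image n Be z"
    "\<And>x. x \<in> zvecs n \<Longrightarrow> nonzero_image n Be x \<Longrightarrow> normsq n Be z \<le> normsq n Be x"
    "lambda1 n Be = vlen n Be z"
    using shortest_vector_exists[OF y(1)] by blast
  have xz: "x \<in> zvecs n" and Nx: "normsq n Be x = normsq n Be z"
    using x SB_iff_normsq[OF z(4)] by auto
  have "0 < normsq n Be x" using Nx normsq_ge_1[OF z(2)] by simp
  then have "nonzero_image n B x" using nonzero_image_if_normsq_pos Be_nonzero_iff by blast
  then have LU: "L \<le> normsq n B x" unfolding L_def using y(3) xz by blast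
  have "normsq n Be x \<le> normsq n Be y" using Nx z(3) y(1) \<open>nonzero_image n Be y\<close> by simp
  moreover have L0: "0 \<le> L" using normsq_ge_1[OF y(2)] unfolding L_def by simp
  moreover have "2 * K * (2 * L + 1) + K^2 * L < p^2"
    using perturbation_coefficient[OF L0] y(5) unfolding L_def by simp
  ultimately have "normsq n B x \<le> L"
    using normsq_comparison[OF eps_bounds(3,1) Q_bounds(2) _ L0 Be_sandwich(1)[of x]]
      Be_sandwich(2)[of y] unfolding L_def by blast
  then show "x \<in> SB n B" using SB_iff_normsq[OF y(4)] LU xz unfolding L_def by simp
  show "(lambda1 n Be)^2 = real_of_int (normsq n Be x)"
    unfolding z(4) vlen_def Nx using normsq_nonneg[of n Be z] by simp
qed

text \<open>For a shortest vector x of L(B), |(Bx)_i| <= nM and, by Cramer, |x_j| <= K M <= Q; all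
  integer coefficients of the expansion of |B_eps x|^2 are therefore at most p/2.\<close>
lemma SB_coefficient_bounds:
  assumes x: "x \<in> SB n B"
  shows "\<bar>normsq n B x\<bar> \<le> p div 2"
    and "\<And>i. i \<in> {1..n} \<Longrightarrow> \<bar>(x i)^2\<bar> \<le> p div 2"
    and "\<And>i. i \<in> {1..n} \<Longrightarrow> \<bar>2 * (\<Sum>k=1..n. B 1 k * x k) * x i\<bar> \<le> p div 2"
    and "\<And>i j. i \<in> {1..n} \<Longrightarrow> j \<in> {1..n} \<Longrightarrow> \<bar>2 * x i * x j\<bar> \<le> p div 2"
proof -
  have M0: "0 \<le> M" by (rule M_nonneg)
  have U: "normsq n B x \<le> int n * M^2" by (rule SB_normsq_bound[OF x])
  have "int n * M^2 \<le> (int n * int n) * (M+1)^2"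
    by (rule mult_mono) (use n_pos M0 in \<open>auto intro: power_mono\<close>)
  then have nM: "int n * M^2 \<le> (int n * (M+1))^2" by (simp add: power2_eq_square mult_ac)
  show "\<bar>normsq n B x\<bar> \<le> p div 2" using U nM p_bounds(1) normsq_nonneg[of n B x] by simp
  have Bx: "\<bar>matvec n B x i\<bar> \<le> int n * M" if "i \<in> {1..n}" for i
  proof -
    have "(matvec n B x i)^2 \<le> int n * M^2"
      using component_le_normsq[OF that, of B x] U by simp
    also have "\<dots> \<le> (int n * int n) * M^2" by (rule mult_right_mono) (use n_pos in auto)
    finally have "(matvec n B x i)^2 \<le> (int n * M)^2" by (simp add: power2_eq_square mult_ac)
    then have "\<bar>matvec n B x i\<bar> \<le> \<bar>int n * M\<bar>" by (simp only: abs_le_square_iff)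
    then show ?thesis using M0 by simp
  qed
  have xQ: "\<bar>x j\<bar> \<le> Q" if "j \<in> {1..n}" for j
  proof -
    have "\<bar>x j\<bar> \<le> fact n * M^(n-1) * (int n * M)"
      by (rule coordinate_bound[OF nonsing that Bx entry_bound M0])
    also have "\<dots> = K * M" unfolding K_def by (simp add: algebra_simps)
    finally show ?thesis using Q_bounds(4) by simp
  qed
  have Q0: "0 \<le> Q" using Q_bounds(1) by simp
  show "\<bar>(x i)^2\<bar> \<le> p div 2" if "i \<in> {1..n}" for i
    using power_mono[OF xQ[OF that], of 2] p_bounds(3) Q0 by (simp add: power2_abs) (smt (verit) zero_le_power2)
  show "\<bar>2 * (\<Sum>k=1..n. B 1 k * x k) * x i\<bar> \<le> p div 2" if "i \<in> {1..n}" for i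
  proof -
    have "(\<Sum>k=1..n. B 1 k * x k) = matvec n B x 1" by (simp add: matvec_def)
    then have "\<bar>2 * (\<Sum>k=1..n. B 1 k * x k) * x i\<bar> = 2 * (\<bar>matvec n B x 1\<bar> * \<bar>x i\<bar>)"
      by (simp add: abs_mult)
    also have "\<dots> \<le> 2 * ((int n * (M+1)) * Q)"
      using mult_mono[OF _ xQ[OF that]] Bx[of 1] n_pos M0 by (simp add: distrib_left)
    also have "\<dots> \<le> 4 * Q * (int n * (M+1))"
    proof -
      have "0 \<le> int n * (M+1) * Q" using Q0 M0 by simp
      moreover have "4 * Q * (int n * (M+1)) = 4 * (int n * (M+1) * Q)" by (simp add: mult_ac)
      ultimately show ?thesis by linarith
    qed
    also have "\<dots> \<le> p div 2" by (rule p_bounds(2))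
    finally show ?thesis .
  qed
  show "\<bar>2 * x i * x j\<bar> \<le> p div 2" if "i \<in> {1..n}" "j \<in> {1..n}" for i j
  proof -
    have "\<bar>x i\<bar> * \<bar>x j\<bar> \<le> Q * Q" by (rule mult_mono) (use xQ that Q0 in auto)
    moreover have "0 \<le> Q * Q" using Q0 by simp
    moreover have "\<bar>2 * x i * x j\<bar> = 2 * (\<bar>x i\<bar> * \<bar>x j\<bar>)" by (simp add: abs_mult)
    ultimately show ?thesis using p_bounds(3) unfolding power2_eq_square by linarith
  qed
qed

lemma eps_products:
  shows "eps i * eps j = p ^ (a i + a j)"
    and "1 \<le> i \<and> i \<le> j \<and> j \<le> n+1 \<and> 1 \<le> k \<and> k \<le> l \<and> l \<le> n+1 \<and> (i,j) \<noteq> (k,l)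
          \<Longrightarrow> eps i * eps j \<noteq> eps k * eps l"
proof -
  show pw: "eps i * eps j = p ^ (a i + a j)" for i j unfolding eps_eq by (simp add: power_add)
  assume "1 \<le> i \<and> i \<le> j \<and> j \<le> n+1 \<and> 1 \<le> k \<and> k \<le> l \<and> l \<le> n+1 \<and> (i,j) \<noteq> (k,l)"
  then have "a i + a j \<noteq> a k + a l" using adm unfolding admissible_exps_def by blast
  then show "eps i * eps j \<noteq> eps k * eps l" unfolding pw using p_bounds(5) by simp
qed

end

theorem mainTheorem5:
  fixes n :: nat and B :: "nat \<Rightarrow> nat \<Rightarrow> int" and a :: "nat \<Rightarrow> nat"
  assumes "n \<ge> 1"
    and "nonsingular n B"
    and "admissible_exps n a"
  defines "M \<equiv> maxentry n B"
  defines "p \<equiv> constp n M"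
  defines "eps \<equiv> (\<lambda>i. p ^ a i)"
  defines "Be \<equiv> Beps n B eps"
  shows "SB n Be \<subseteq> SB n B \<and>
    (\<forall>x\<in>SB n Be.
      (lambda1 n Be)^2 = real_of_int
        (normsq n B x * eps (n+1)^2
         + (\<Sum>i=1..n. (x i)^2 * (eps i)^2)
         + (\<Sum>i=1..n. 2 * (\<Sum>k=1..n. B 1 k * x k) * x i * eps (n+1) * eps i)
         + (\<Sum>i=1..n. \<Sum>j\<in>{i<..n}. 2 * x i * x j * eps i * eps j))
      \<and> \<bar>normsq n B x\<bar> \<le> p div 2
      \<and> (\<forall>i\<in>{1..n}. \<bar>(x i)^2\<bar> \<le> p div 2)
      \<and> (\<forall>i\<in>{1..n}. \<bar>2 * (\<Sum>k=1..n. B 1 k * x k) * x i\<bar> \<le> p div 2)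
      \<and> (\<forall>i\<in>{1..n}. \<forall>j\<in>{1..n}. i < j \<longrightarrow> \<bar>2 * x i * x j\<bar> \<le> p div 2))
    \<and> (\<forall>i j. 1 \<le> i \<and> i \<le> j \<and> j \<le> n+1 \<longrightarrow> (\<exists>e::nat. eps i * eps j = p ^ e))
    \<and> (\<forall>i j k l. 1 \<le> i \<and> i \<le> j \<and> j \<le> n+1 \<and> 1 \<le> k \<and> k \<le> l \<and> l \<le> n+1
        \<and> (i,j) \<noteq> (k,l) \<longrightarrow> eps i * eps j \<noteq> eps k * eps l)"
proof -
  interpret construction n B a M p eps Be
    using assms(1-3) by unfold_locales (simp_all add: M_def p_def eps_def Be_def)
  have shortest: "x \<in> SB n B" "(lambda1 n Be)^2 = real_of_int (normsq n Be x)"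
    if "x \<in> SB n Be" for x
    using SB_Be_subset[OF that] by auto
  have expansion: "normsq n Be x = normsq n B x * eps (n+1)^2
         + (\<Sum>i=1..n. (x i)^2 * (eps i)^2)
         + (\<Sum>i=1..n. 2 * (\<Sum>k=1..n. B 1 k * x k) * x i * eps (n+1) * eps i)
         + (\<Sum>i=1..n. \<Sum>j\<in>{i<..n}. 2 * x i * x j * eps i * eps j)" for x
    unfolding Be_eq by (rule normsq_Beps_expansion[OF n_pos])
  show ?thesis
  proof (intro conjI ballI subsetI allI impI)
    fix x assume "x \<in> SB n Be"
    show "(lambda1 n Be)^2 = real_of_int
        (normsq n B x * eps (n+1)^2
         + (\<Sum>i=1..n. (x i)^2 * (eps i)^2)
         + (\<Sum>i=1..n. 2 * (\<Sum>k=1..n. B 1 k * x k) * x i * eps (n+1) * eps i)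
         + (\<Sum>i=1..n. \<Sum>j\<in>{i<..n}. 2 * x i * x j * eps i * eps j))"
      unfolding shortest(2)[OF \<open>x \<in> SB n Be\<close>] expansion ..
  qed (use shortest SB_coefficient_bounds[OF shortest(1)] eps_products in auto)
qed

end
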